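(* For a finite graph $G$ on $n$ vertices, $\theta(G)=D(G)$ if and only if $G$ is asymmetric (i.e. $\mathrm{Aut}(G)=\{\mathrm{id}\}$), or $G\cong K_n$, or $G\cong\overline{K_n}$.
   Context: All graphs are finite and simple. A vertex coloring of $G$ is distinguishing if no non-identity automorphism of $G$ maps every vertex to a vertex of the same color. The distinguishing number $D(G)$ is the minimum number of colors in a distinguishing coloring of $G$. The distinguishing threshold $\theta(G)$ is the minimum $k$ such that every vertex coloring of $G$ using exactly $k$ colors is distinguishing; equivalently $\theta(G)=1+\max\{c(\alpha):\alpha\in\mathrm{Aut}(G)\}$, with $c(\alpha)$ the number of cycles of $\alpha$ (fixed points counted) and $c(\mathrm{id})=0$. *)

theory Defs
  imports Main
begin

text \<open>A finite simple graph: finite vertex set V and a symmetric irreflexive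
  adjacency relation E (only its restriction to V matters).\<close>
definition simple_graph :: "'a set \<Rightarrow> ('a \<Rightarrow> 'a \<Rightarrow> bool) \<Rightarrow> bool" where
  "simple_graph V E \<longleftrightarrow> finite V \<and> (\<forall>u\<in>V. \<forall>v\<in>V. E u v \<longrightarrow> E v u) \<and> (\<forall>v\<in>V. \<not> E v v)"

definition automorphism :: "'a set \<Rightarrow> ('a \<Rightarrow> 'a \<Rightarrow> bool) \<Rightarrow> ('a \<Rightarrow> 'a) \<Rightarrow> bool" where
  "automorphism V E \<sigma> \<longleftrightarrow> bij_betw \<sigma> V V \<and> (\<forall>u\<in>V. \<forall>v\<in>V. E (\<sigma> u) (\<sigma> v) \<longleftrightarrow> E u v)"

definition asymmetric :: "'a set \<Rightarrow> ('a \<Rightarrow> 'a \<Rightarrow> bool) \<Rightarrow> bool" where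
  "asymmetric V E \<longleftrightarrow> (\<forall>\<sigma>. automorphism V E \<sigma> \<longrightarrow> (\<forall>v\<in>V. \<sigma> v = v))"

definition distinguishing :: "'a set \<Rightarrow> ('a \<Rightarrow> 'a \<Rightarrow> bool) \<Rightarrow> ('a \<Rightarrow> nat) \<Rightarrow> bool" where
  "distinguishing V E c \<longleftrightarrow>
     (\<forall>\<sigma>. automorphism V E \<sigma> \<and> (\<forall>v\<in>V. c (\<sigma> v) = c v) \<longrightarrow> (\<forall>v\<in>V. \<sigma> v = v))"

definition distinguishing_number :: "'a set \<Rightarrow> ('a \<Rightarrow> 'a \<Rightarrow> bool) \<Rightarrow> nat" where
  "distinguishing_number V E =
     (LEAST k. \<exists>c. c ` V \<subseteq> {0..<k} \<and> distinguishing V E c)"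

definition distinguishing_threshold :: "'a set \<Rightarrow> ('a \<Rightarrow> 'a \<Rightarrow> bool) \<Rightarrow> nat" where
  "distinguishing_threshold V E =
     (LEAST k. k \<ge> 1 \<and> (\<forall>c :: 'a \<Rightarrow> nat. card (c ` V) = k \<longrightarrow> distinguishing V E c))"

text \<open>G is isomorphic to the complete graph K_n resp. the empty graph on n = |V| vertices.\<close>
definition iso_complete :: "'a set \<Rightarrow> ('a \<Rightarrow> 'a \<Rightarrow> bool) \<Rightarrow> bool" where
  "iso_complete V E \<longleftrightarrow> (\<forall>u\<in>V. \<forall>v\<in>V. u \<noteq> v \<longrightarrow> E u v)"

definition iso_empty :: "'a set \<Rightarrow> ('a \<Rightarrow> 'a \<Rightarrow> bool) \<Rightarrow> bool" where
  "iso_empty V E \<longleftrightarrow> (\<forall>u\<in>V. \<forall>v\<in>V. \<not> E u v)"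

end

theory Submission
  imports Defs
begin

text \<open>Suppose \<open>\<theta>(G) = D(G) = m \<ge> 2\<close>, fix a set \<open>S\<close> of \<open>m - 2\<close> vertices and let
  \<open>R = V - S\<close>. Colouring \<open>S\<close> injectively and \<open>R\<close> with one further colour uses \<open>m - 1\<close> colours,
  so some automorphism \<open>\<sigma> \<noteq> id\<close> fixes \<open>S\<close> pointwise. Splitting a proper nonempty
  \<open>\<sigma>\<close>-invariant part of \<open>R\<close> off with yet another colour would give an \<open>m\<close>-colouring
  preserved by \<open>\<sigma>\<close>, so \<open>\<sigma>\<close> permutes \<open>R\<close> as a single cycle, and \<open>G\<close> is circulant on \<open>R\<close>.
  If \<open>|R| \<ge> 3\<close>, the reflection of this cycle is an automorphism fixing one vertex of \<open>R\<close>
  but not all of \<open>R\<close>, which the same splitting argument forbids. Hence \<open>|R| \<le> 2\<close>, i.e.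
  \<open>m = n\<close>, and then every transposition is an automorphism, so \<open>G\<close> is complete or empty.
  Conversely \<open>\<theta> = D = 1\<close> for asymmetric graphs and \<open>\<theta> = D = n\<close> when every
  permutation of \<open>V\<close> is an automorphism.\<close>

section \<open>Automorphisms and colourings\<close>

lemma automorphism_in: "automorphism V E \<sigma> \<Longrightarrow> v \<in> V \<Longrightarrow> \<sigma> v \<in> V"
  unfolding automorphism_def by (meson bij_betwE)

lemma automorphism_inj_on: "automorphism V E \<sigma> \<Longrightarrow> inj_on \<sigma> V"
  unfolding automorphism_def by (simp add: bij_betw_def)

lemma automorphism_adj:
  "automorphism V E \<sigma> \<Longrightarrow> u \<in> V \<Longrightarrow> v \<in> V \<Longrightarrow> E (\<sigma> u) (\<sigma> v) \<longleftrightarrow> E u v"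
  unfolding automorphism_def by blast

lemma automorphism_preserves_complement:
  assumes aut: "automorphism V E \<sigma>" and "finite A" "A \<subseteq> V" "\<sigma> ` A \<subseteq> A" and v: "v \<in> V - A"
  shows "\<sigma> v \<in> V - A"
proof -
  have inj: "inj_on \<sigma> V" using aut by (rule automorphism_inj_on)
  then have "\<sigma> ` A = A" using assms endo_inj_surj inj_on_subset by metis
  then show ?thesis using inj v \<open>A \<subseteq> V\<close> automorphism_in[OF aut] by (auto dest: inj_onD)
qed

lemma distinguishing_if_inj_on: "inj_on c V \<Longrightarrow> distinguishing V E c"
  unfolding distinguishing_def by (meson automorphism_in inj_onD)

lemma distinguishing_comp_inj_on:
  assumes "inj_on g (c ` V)" "distinguishing V E c"
  shows "distinguishing V E (g \<circ> c)"
  unfolding distinguishing_def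
proof (intro allI impI)
  fix \<sigma> assume \<sigma>: "automorphism V E \<sigma> \<and> (\<forall>v\<in>V. (g \<circ> c) (\<sigma> v) = (g \<circ> c) v)"
  then have "\<forall>v\<in>V. c (\<sigma> v) = c v"
    using assms(1) automorphism_in by (fastforce simp: inj_on_def)
  then show "\<forall>v\<in>V. \<sigma> v = v" using \<sigma> assms(2) unfolding distinguishing_def by blast
qed

lemma asymmetric_if_constant_distinguishing:
  "c ` V \<subseteq> {k} \<Longrightarrow> distinguishing V E c \<Longrightarrow> asymmetric V E"
  unfolding asymmetric_def distinguishing_def by (metis automorphism_in image_subset_iff singletonD)

lemma distinguishing_if_asymmetric: "asymmetric V E \<Longrightarrow> distinguishing V E c"
  unfolding asymmetric_def distinguishing_def by blast

lemma ex_colouring_card_image: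
  assumes "finite V" "1 \<le> k" "k \<le> card V"
  obtains c :: "'a \<Rightarrow> nat" where "card (c ` V) = k"
proof -
  obtain h where h: "bij_betw h V {0..<card V}" using ex_bij_betw_finite_nat[OF assms(1)] ..
  have hV: "h ` V = {0..<card V}" using h by (simp add: bij_betw_def)
  have "(\<lambda>v. min (h v) (k - 1)) ` V = (\<lambda>i. min i (k - 1)) ` {0..<card V}"
    unfolding hV[symmetric] image_image ..
  also have "\<dots> = {0..<k}"
  proof
    show "(\<lambda>i. min i (k - 1)) ` {0..<card V} \<subseteq> {0..<k}" using assms(2) by auto
    show "{0..<k} \<subseteq> (\<lambda>i. min i (k - 1)) ` {0..<card V}"
    proof
      fix i assume "i \<in> {0..<k}"
      then show "i \<in> (\<lambda>i. min i (k - 1)) ` {0..<card V}"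
        by (intro image_eqI[where x = i]) (use assms(3) in auto)
    qed
  qed
  finally show thesis using that by (metis card_atLeastLessThan diff_zero)
qed

lemma distinguishing_threshold_spec:
  assumes "finite V" "V \<noteq> {}"
  shows "1 \<le> distinguishing_threshold V E" "distinguishing_threshold V E \<le> card V"
    and "\<And>c :: 'a \<Rightarrow> nat. card (c ` V) = distinguishing_threshold V E \<Longrightarrow> distinguishing V E c"
proof -
  let ?P = "\<lambda>k. 1 \<le> k \<and> (\<forall>c :: 'a \<Rightarrow> nat. card (c ` V) = k \<longrightarrow> distinguishing V E c)"
  have "?P (card V)"
    using assms by (auto simp: Suc_le_eq card_gt_0_iff intro: distinguishing_if_inj_on eq_card_imp_inj_on)
  then have "?P (distinguishing_threshold V E)" "distinguishing_threshold V E \<le> card V"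
    unfolding distinguishing_threshold_def by (rule LeastI, rule Least_le)
  then show "1 \<le> distinguishing_threshold V E" "distinguishing_threshold V E \<le> card V"
    "\<And>c :: 'a \<Rightarrow> nat. card (c ` V) = distinguishing_threshold V E \<Longrightarrow> distinguishing V E c"
    by blast+
qed

lemma distinguishing_number_spec:
  assumes "finite V"
  shows "distinguishing_number V E \<le> card V"
    and "\<exists>c. c ` V \<subseteq> {0..<distinguishing_number V E} \<and> distinguishing V E c"
proof -
  let ?P = "\<lambda>k. \<exists>c. c ` V \<subseteq> {0..<k} \<and> distinguishing V E c"
  obtain h where "bij_betw h V {0..<card V}" using ex_bij_betw_finite_nat[OF assms] ..
  then have "?P (card V)" by (auto simp: bij_betw_def intro: distinguishing_if_inj_on)
  then show "distinguishing_number V E \<le> card V" "?P (distinguishing_number V E)"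
    unfolding distinguishing_number_def by (rule Least_le, rule LeastI)
qed

lemma not_distinguishing_if_card_less_number:
  assumes "finite V" "card (c ` V) < distinguishing_number V E"
  shows "\<not> distinguishing V E c"
proof
  assume "distinguishing V E c"
  obtain g where g: "bij_betw g (c ` V) {0..<card (c ` V)}"
    using ex_bij_betw_finite_nat assms(1) by blast
  then have "(g \<circ> c) ` V \<subseteq> {0..<card (c ` V)}" by (auto simp: bij_betw_def)
  moreover have "distinguishing V E (g \<circ> c)"
    using g \<open>distinguishing V E c\<close> by (intro distinguishing_comp_inj_on) (simp add: bij_betw_def)
  ultimately have "distinguishing_number V E \<le> card (c ` V)"
    unfolding distinguishing_number_def by (blast intro: Least_le)
  then show False using assms(2) by simp
qed

section \<open>Single orbits of a permutation and their reflections\<close>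

lemma funpow_in_on: "f ` R \<subseteq> R \<Longrightarrow> x \<in> R \<Longrightarrow> (f ^^ n) x \<in> R"
  by (induction n) auto

lemma funpow_returns_on:
  assumes "finite R" "inj_on f R" "f ` R \<subseteq> R" "x \<in> R"
  obtains n where "0 < n" "(f ^^ n) x = x"
proof -
  have "\<not> inj_on (\<lambda>k. (f ^^ k) x) {..card R}"
  proof
    assume "inj_on (\<lambda>k. (f ^^ k) x) {..card R}"
    then have "card {..card R} \<le> card R"
      using card_inj_on_le funpow_in_on assms by (metis image_subsetI)
    then show False by simp
  qed
  then obtain i j where ij: "i < j" "(f ^^ i) x = (f ^^ j) x"
    unfolding inj_on_def by (metis linorder_neqE_nat)
  have "(f ^^ (i - k)) x = (f ^^ (j - k)) x" if "k \<le> i" for k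
    using that
  proof (induction k)
    case (Suc k)
    moreover have "i - k = Suc (i - Suc k)" "j - k = Suc (j - Suc k)"
      using Suc.prems \<open>i < j\<close> by arith+
    ultimately have "f ((f ^^ (i - Suc k)) x) = f ((f ^^ (j - Suc k)) x)" by simp
    then show ?case using assms funpow_in_on by (meson inj_onD)
  qed (simp add: ij)
  from this[of i] have "(f ^^ (j - i)) x = x" by simp
  then show ?thesis using that \<open>i < j\<close> zero_less_diff by blast
qed

lemma cyclic_labelling:
  assumes "finite R" "inj_on f R" "f ` R \<subseteq> R" "x \<in> R"
    and minimal: "\<And>A. A \<subseteq> R \<Longrightarrow> A \<noteq> {} \<Longrightarrow> f ` A \<subseteq> A \<Longrightarrow> A = R"
  obtains F :: "int \<Rightarrow> 'a" where "range F = R" "\<And>a. F (a + 1) = f (F a)"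
    "\<And>a b. F a = F b \<longleftrightarrow> a mod int (card R) = b mod int (card R)"
proof -
  define p where "p = (LEAST n. 0 < n \<and> (f ^^ n) x = x)"
  obtain n where "0 < n" "(f ^^ n) x = x" using funpow_returns_on assms(1-4) .
  then have p: "0 < p" "(f ^^ p) x = x"
    unfolding p_def by (metis (mono_tags, lifting) LeastI)+
  have inj: "inj_on (\<lambda>k. (f ^^ k) x) {0..<p}"
    by (rule inj_on_funpow_least) (use p not_less_Least in \<open>auto simp: p_def\<close>)
  define F where "F a = (f ^^ nat (a mod int p)) x" for a
  have F_nat: "F (int k) = (f ^^ k) x" for k
    using funpow_mod_eq[OF p(2)] by (simp add: F_def flip: of_nat_mod)
  have F_step: "F (a + 1) = f (F a)" for a
  proof -
    obtain k where k: "a mod int p = int k" using p(1) by (metis pos_mod_sign of_nat_0_less_iff nonneg_int_cases)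
    have "(a + 1) mod int p = (int k + 1) mod int p" by (metis k mod_add_left_eq)
    then have "F (a + 1) = F (int k + 1)" by (simp add: F_def)
    also have "\<dots> = f (F (int k))" using F_nat[of "Suc k"] F_nat[of k] by (simp add: add.commute)
    also have "F (int k) = F a" using F_nat[of k] by (simp add: F_def k)
    finally show ?thesis .
  qed
  have index: "nat (a mod int p) < p" for a using p(1) by (simp add: nat_less_iff)
  have F_eq: "F a = F b \<longleftrightarrow> a mod int p = b mod int p" for a b
    using inj_onD[OF inj, of "nat (a mod int p)" "nat (b mod int p)"] index p(1)
    by (auto simp: F_def eq_nat_nat_iff)
  have range_F: "range F = (\<lambda>k. (f ^^ k) x) ` {0..<p}"
  proof
    have "F a \<in> (\<lambda>k. (f ^^ k) x) ` {0..<p}" for a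
      unfolding F_def by (rule image_eqI[where x = "nat (a mod int p)"]) (use index[of a] in simp_all)
    then show "range F \<subseteq> (\<lambda>k. (f ^^ k) x) ` {0..<p}" by blast
    show "(\<lambda>k. (f ^^ k) x) ` {0..<p} \<subseteq> range F" using F_nat by (metis image_subsetI rangeI)
  qed
  have "range F = R"
  proof (rule minimal)
    show "range F \<subseteq> R" unfolding range_F using funpow_in_on[OF assms(3,4)] by blast
    show "f ` range F \<subseteq> range F" by (auto simp flip: F_step)
  qed simp
  moreover have "card R = p" using calculation range_F card_image[OF inj] by simp
  ultimately show thesis using F_step F_eq by (intro that[of F]) simp_all
qed

lemma reflection_automorphism:
  fixes F :: "int \<Rightarrow> 'a"
  assumes sym: "\<And>u v. u \<in> V \<Longrightarrow> v \<in> V \<Longrightarrow> E u v = E v u"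
    and aut: "automorphism V E \<sigma>" and fixed: "\<And>v. v \<in> V - range F \<Longrightarrow> \<sigma> v = v"
    and F_V: "range F \<subseteq> V" and rotate: "\<And>a. F (a + 1) = \<sigma> (F a)"
    and F_neg: "\<And>a b. F a = F b \<Longrightarrow> F (- a) = F (- b)"
  obtains \<beta> where "automorphism V E \<beta>" "\<And>a. \<beta> (F a) = F (- a)"
    "\<And>v. v \<in> V - range F \<Longrightarrow> \<beta> v = v"
proof -
  define \<beta> where "\<beta> v = (if v \<in> range F then F (- inv F v) else v)" for v
  have \<beta>_F: "\<beta> (F a) = F (- a)" for a
    using F_neg[OF f_inv_into_f[of "F a" F UNIV]] by (simp add: \<beta>_def)
  have \<beta>_outside: "\<beta> v = v" if "v \<notin> range F" for v
    using that by (simp add: \<beta>_def)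
  have F_in: "F a \<in> V" for a using F_V by blast
  have involution: "\<beta> (\<beta> v) = v" for v
    by (cases "v \<in> range F") (auto simp: \<beta>_F \<beta>_outside)
  have "\<beta> v \<in> V" if "v \<in> V" for v
    using that by (cases "v \<in> range F") (auto simp: \<beta>_F \<beta>_outside F_in)
  then have "bij_betw \<beta> V V"
    using involution by (intro bij_betw_byWitness[where f' = \<beta>]) auto
  have shift_nat: "E (F (a + int n)) (F (b + int n)) = E (F a) (F b)" for a b n
  proof (induction n)
    case (Suc n)
    then show ?case
      using rotate[of "a + int n"] rotate[of "b + int n"] automorphism_adj[OF aut F_in F_in]
      by (simp add: ac_simps)
  qed simp
  have shift: "E (F (a + t)) (F (b + t)) = E (F a) (F b)" for a b t
  proof (cases "0 \<le> t")
    case True then show ?thesis using shift_nat by (metis nonneg_int_cases)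
  next
    case False
    then obtain n where "t = - int n" by (metis nonpos_int_cases linear)
    then show ?thesis using shift_nat[of "a + t" n "b + t"] by simp
  qed
  have outside_nat: "E (F (a + int n)) w = E (F a) w" if "w \<in> V - range F" for a n w
  proof (induction n)
    case (Suc n)
    then show ?case
      using rotate[of "a + int n"] automorphism_adj[OF aut F_in, of w] that fixed[OF that]
      by (simp add: ac_simps)
  qed simp
  have outside: "E (F a) w = E (F 0) w" if "w \<in> V - range F" for a w
  proof (cases "0 \<le> a")
    case True then show ?thesis using outside_nat[OF that, of 0] by (metis add_0 nonneg_int_cases)
  next
    case False
    then obtain n where "a = - int n" by (metis nonpos_int_cases linear)
    then show ?thesis using outside_nat[OF that, of a n] by simp
  qed
  have "E (\<beta> u) (\<beta> w) = E u w" if "u \<in> V" "w \<in> V" for u w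
  proof (cases "u \<in> range F"; cases "w \<in> range F")
    assume "u \<in> range F" "w \<in> range F"
    then obtain a b where "u = F a" "w = F b" by blast
    then show ?thesis
      using shift[of "- a" "a + b" "- b"] sym[OF F_in F_in] by (simp add: \<beta>_F add.commute)
  next
    assume "u \<in> range F" "w \<notin> range F"
    then obtain a where "u = F a" by blast
    then show ?thesis
      using outside[of w "- a"] outside[of w a] that \<open>w \<notin> range F\<close> by (simp add: \<beta>_F \<beta>_outside)
  next
    assume "u \<notin> range F" "w \<in> range F"
    then obtain b where "w = F b" by blast
    then show ?thesis
      using outside[of u "- b"] outside[of u b] that \<open>u \<notin> range F\<close> sym[OF \<open>u \<in> V\<close> F_in]
      by (simp add: \<beta>_F \<beta>_outside)
  next
    assume "u \<notin> range F" "w \<notin> range F"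
    then show ?thesis by (simp add: \<beta>_outside)
  qed
  then have "automorphism V E \<beta>"
    using \<open>bij_betw \<beta> V V\<close> by (simp add: automorphism_def)
  then show thesis using that \<beta>_F \<beta>_outside by blast
qed

section \<open>Graphs whose distinguishing threshold equals their distinguishing number\<close>

lemma twins_complete_or_empty:
  assumes graph: "simple_graph V E"
    and twins: "\<And>x y w. x \<in> V \<Longrightarrow> y \<in> V \<Longrightarrow> w \<in> V \<Longrightarrow> x \<noteq> w \<Longrightarrow> y \<noteq> w \<Longrightarrow> E x w = E y w"
  shows "iso_complete V E \<or> iso_empty V E"
proof -
  have sym: "E u v = E v u" if "u \<in> V" "v \<in> V" for u v
    using graph that by (auto simp: simple_graph_def)
  have same: "E u w = E x y" if "u \<in> V" "w \<in> V" "x \<in> V" "y \<in> V" "u \<noteq> w" "x \<noteq> y" for u w x y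
  proof (cases "w = x")
    case True
    then show ?thesis using twins[of u y x] sym[of y x] that by simp
  next
    case False
    have "E u w = E x w" using twins[of u x w] False that by simp
    also have "\<dots> = E w x" using sym[of x w] that by simp
    also have "\<dots> = E y x" using twins[of w y x] False that by simp
    also have "\<dots> = E x y" using sym[of y x] that by simp
    finally show ?thesis .
  qed
  show ?thesis
  proof (cases "\<exists>x\<in>V. \<exists>y\<in>V. x \<noteq> y \<and> E x y")
    case True
    then obtain x y where "x \<in> V" "y \<in> V" "x \<noteq> y" "E x y" by blast
    then have "iso_complete V E" unfolding iso_complete_def using same by metis
    then show ?thesis ..
  next
    case False
    then have "iso_empty V E" using graph unfolding iso_empty_def simple_graph_def by metis
    then show ?thesis ..
  qed
qed

text \<open>The situation \<open>\<theta>(G) = D(G) = m\<close>.\<close>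

locale sharp_threshold =
  fixes V :: "'a set" and E :: "'a \<Rightarrow> 'a \<Rightarrow> bool" and m :: nat
  assumes graph: "simple_graph V E"
    and exactly_m_distinguishing: "\<And>c :: 'a \<Rightarrow> nat. card (c ` V) = m \<Longrightarrow> distinguishing V E c"
    and fewer_not_distinguishing: "\<And>c :: 'a \<Rightarrow> nat. card (c ` V) < m \<Longrightarrow> \<not> distinguishing V E c"
begin

lemma finite_V: "finite V"
  using graph by (simp add: simple_graph_def)

lemma ex_nontrivial_automorphism_fixing:
  assumes S: "S \<subseteq> V" "card S + 1 < m"
  obtains \<sigma> where "automorphism V E \<sigma>" "\<forall>s\<in>S. \<sigma> s = s" "\<exists>v\<in>V. \<sigma> v \<noteq> v"
proof -
  obtain h :: "'a \<Rightarrow> nat" where h: "inj_on h V" using finite_imp_inj_to_nat_seg finite_V by metis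
  define c where "c v = (if v \<in> S then h v + 1 else 0)" for v
  have finite_S: "finite S" using finite_subset[OF S(1) finite_V] .
  have "card (c ` V) \<le> card (c ` S \<union> {0})"
    by (rule card_mono) (auto simp: c_def finite_S)
  also have "\<dots> \<le> card (c ` S) + card {0::nat}" by (rule card_Un_le)
  also have "\<dots> \<le> card S + 1" using card_image_le[OF finite_S] by simp
  finally have "\<not> distinguishing V E c" using S(2) by (intro fewer_not_distinguishing) simp
  then obtain \<sigma> where \<sigma>: "automorphism V E \<sigma>" "\<forall>v\<in>V. c (\<sigma> v) = c v" "\<exists>v\<in>V. \<sigma> v \<noteq> v"
    unfolding distinguishing_def by blast
  have "\<sigma> s = s" if "s \<in> S" for s
  proof -
    have "s \<in> V" "\<sigma> s \<in> V" using that S(1) automorphism_in[OF \<sigma>(1)] by auto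
    moreover have "c (\<sigma> s) = h s + 1" using \<sigma>(2) \<open>s \<in> V\<close> that by (simp add: c_def)
    then have "\<sigma> s \<in> S" "h (\<sigma> s) = h s" by (auto simp: c_def split: if_splits)
    ultimately show "\<sigma> s = s" using h by (meson inj_onD)
  qed
  then show thesis using that \<sigma>(1,3) by blast
qed

lemma identity_if_fixes_and_splits:
  assumes aut: "automorphism V E \<tau>"
    and S: "S \<subseteq> V" "card S + 2 = m" "\<forall>s\<in>S. \<tau> s = s"
    and A: "A \<subseteq> V - S" "A \<noteq> {}" "A \<noteq> V - S" "\<tau> ` A \<subseteq> A"
  shows "\<forall>v\<in>V. \<tau> v = v"
proof -
  obtain h :: "'a \<Rightarrow> nat" where h: "inj_on h V" using finite_imp_inj_to_nat_seg finite_V by metis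
  define c where "c v = (if v \<in> S then h v + 2 else if v \<in> A then 0 else 1)" for v
  obtain a where a: "a \<in> A" using A(2) by blast
  obtain b where b: "b \<in> V - S - A" using A(1,3) by blast
  have "c ` V = (\<lambda>v. h v + 2) ` S \<union> {0, 1}"
  proof
    show "c ` V \<subseteq> (\<lambda>v. h v + 2) ` S \<union> {0, 1}" by (auto simp: c_def)
    have "(\<lambda>v. h v + 2) ` S = c ` S" by (simp add: c_def)
    moreover have "c a = 0" "c b = 1" using a b A by (auto simp: c_def)
    moreover have "c ` S \<subseteq> c ` V" "c a \<in> c ` V" "c b \<in> c ` V"
      using a b S(1) A(1) by auto
    ultimately show "(\<lambda>v. h v + 2) ` S \<union> {0, 1} \<subseteq> c ` V" by simp
  qed
  moreover have "card ((\<lambda>v. h v + 2) ` S) = card S"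
    using inj_on_subset[OF h S(1)] by (simp add: card_image inj_on_def)
  moreover have "finite S" using S(1) finite_V finite_subset by blast
  moreover have "(\<lambda>v. h v + 2) ` S \<inter> {0, 1} = {}" by auto
  ultimately have "card (c ` V) = m"
    using S(2) by (simp add: card_Un_disjoint)
  then have "distinguishing V E c" by (rule exactly_m_distinguishing)
  moreover have "c (\<tau> v) = c v" if "v \<in> V" for v
  proof -
    have SA: "S \<union> A \<subseteq> V" using S(1) A(1) by blast
    have "\<tau> ` (S \<union> A) \<subseteq> S \<union> A" using S(3) A(4) by auto
    then have "\<tau> v \<in> V - (S \<union> A)" if "v \<in> V - (S \<union> A)"
      using automorphism_preserves_complement[OF aut finite_subset[OF SA finite_V] SA] that by blast
    then show ?thesis using \<open>v \<in> V\<close> S(3) A(1,4) by (auto simp: c_def)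
  qed
  ultimately show ?thesis using aut unfolding distinguishing_def by blast
qed

lemma rotation_of_complement:
  assumes S: "S \<subseteq> V" "card S + 2 = m"
  obtains \<sigma> and F :: "int \<Rightarrow> 'a" where "automorphism V E \<sigma>" "\<forall>s\<in>S. \<sigma> s = s"
    "range F = V - S" "\<And>a. F (a + 1) = \<sigma> (F a)"
    "\<And>a b. F a = F b \<longleftrightarrow> a mod int (card (V - S)) = b mod int (card (V - S))"
proof -
  obtain \<sigma> where \<sigma>: "automorphism V E \<sigma>" "\<forall>s\<in>S. \<sigma> s = s" "\<exists>v\<in>V. \<sigma> v \<noteq> v"
    using ex_nontrivial_automorphism_fixing[OF S(1)] S(2) by auto
  have finite_S: "finite S" using finite_subset[OF S(1) finite_V] .
  have "\<sigma> ` S \<subseteq> S" using \<sigma>(2) by simp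
  then have \<sigma>_R: "\<sigma> ` (V - S) \<subseteq> V - S"
    using automorphism_preserves_complement[OF \<sigma>(1) finite_S S(1)] by auto
  have minimal: "A = V - S" if "A \<subseteq> V - S" "A \<noteq> {}" "\<sigma> ` A \<subseteq> A" for A
  proof (rule ccontr)
    assume "A \<noteq> V - S"
    then have "\<forall>v\<in>V. \<sigma> v = v" using identity_if_fixes_and_splits[OF \<sigma>(1) S \<sigma>(2)] that by simp
    then show False using \<sigma>(3) by blast
  qed
  obtain x where "x \<in> V - S" using \<sigma>(2,3) by blast
  obtain F :: "int \<Rightarrow> 'a" where F: "range F = V - S" "\<And>a. F (a + 1) = \<sigma> (F a)"
    "\<And>a b. F a = F b \<longleftrightarrow> a mod int (card (V - S)) = b mod int (card (V - S))"
    by (rule cyclic_labelling[OF finite_Diff[OF finite_V]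
          inj_on_subset[OF automorphism_inj_on[OF \<sigma>(1)] Diff_subset] \<sigma>_R \<open>x \<in> V - S\<close>])
      (use minimal in blast)+
  show thesis by (rule that[OF \<sigma>(1,2) F])
qed

lemma card_complement_le_two:
  assumes S: "S \<subseteq> V" "card S + 2 = m"
  shows "card (V - S) \<le> 2"
proof (rule ccontr)
  assume "\<not> card (V - S) \<le> 2"
  then have R3: "3 \<le> card (V - S)" by simp
  obtain \<sigma> and F :: "int \<Rightarrow> 'a" where \<sigma>: "automorphism V E \<sigma>" "\<forall>s\<in>S. \<sigma> s = s"
    and F: "range F = V - S" "\<And>a. F (a + 1) = \<sigma> (F a)"
      "\<And>a b. F a = F b \<longleftrightarrow> a mod int (card (V - S)) = b mod int (card (V - S))"
    by (fact rotation_of_complement[OF S])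
  have sym: "E u v = E v u" if "u \<in> V" "v \<in> V" for u v
    using graph that by (auto simp: simple_graph_def)
  have S_eq: "S = V - range F" using F(1) S(1) by auto
  have F_neg: "F (- a) = F (- b)" if "F a = F b" for a b
    using that F(3) mod_minus_cong by metis
  obtain \<beta> where \<beta>: "automorphism V E \<beta>" "\<And>a. \<beta> (F a) = F (- a)" "\<forall>s\<in>S. \<beta> s = s"
    using reflection_automorphism[of V E \<sigma> F, OF sym \<sigma>(1) _ _ F(2) F_neg] \<sigma>(2) F(1) S_eq
    by (metis (no_types, lifting) Diff_subset)
  have "{F 0} \<noteq> V - S"
  proof
    assume "{F 0} = V - S"
    then have "card (V - S) = 1" by (simp flip: \<open>{F 0} = V - S\<close>)
    then show False using R3 by simp
  qed
  then have "\<forall>v\<in>V. \<beta> v = v"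
    by (intro identity_if_fixes_and_splits[OF \<beta>(1) S \<beta>(3)]) (use F(1) in \<open>auto simp: \<beta>(2)\<close>)
  moreover have "F 1 \<in> V" using F(1) by blast
  ultimately have "F (- 1) = F 1" using \<beta>(2)[of 1] by simp
  then have "(- 1) mod int (card (V - S)) = 1 mod int (card (V - S))" using F(3) by blast
  then show False using R3 by (simp add: zmod_zminus1_eq_if)
qed

lemma all_pairs_twins:
  assumes "card V = m" "x \<in> V" "y \<in> V" "w \<in> V" "x \<noteq> w" "y \<noteq> w"
  shows "E x w = E y w"
proof (cases "x = y")
  case False
  define S where "S = V - {x, y}"
  have "card {x, y} = 2" using False by simp
  moreover have "card {x, y} \<le> card V" using card_mono[OF finite_V] assms(2,3) by simp
  ultimately have S: "S \<subseteq> V" "card S + 2 = m"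
    using assms(1-3) finite_V by (auto simp: S_def card_Diff_subset)
  obtain \<sigma> where \<sigma>: "automorphism V E \<sigma>" "\<forall>s\<in>S. \<sigma> s = s" "\<exists>v\<in>V. \<sigma> v \<noteq> v"
    using ex_nontrivial_automorphism_fixing[OF S(1)] S(2) by auto
  have "\<sigma> ` S \<subseteq> S" using \<sigma>(2) by simp
  moreover have "V - S = {x, y}" using assms(2,3) by (auto simp: S_def)
  ultimately have xy: "\<sigma> x \<in> {x, y}" "\<sigma> y \<in> {x, y}"
    using automorphism_preserves_complement[OF \<sigma>(1) finite_subset[OF S(1) finite_V] S(1)]
    by (metis insertCI)+
  have "\<sigma> x = y"
  proof (rule ccontr)
    assume "\<sigma> x \<noteq> y"
    then have "\<sigma> x = x" using xy by blast
    then have "\<sigma> y = y"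
      using xy False inj_onD[OF automorphism_inj_on[OF \<sigma>(1)], of x y] assms(2,3) by auto
    then have "\<forall>v\<in>V. \<sigma> v = v" using \<open>\<sigma> x = x\<close> \<sigma>(2) by (auto simp: S_def)
    then show False using \<sigma>(3) by blast
  qed
  moreover have "\<sigma> w = w" using \<sigma>(2) assms by (simp add: S_def)
  ultimately show ?thesis using automorphism_adj[OF \<sigma>(1) assms(2,4)] by simp
qed simp

lemma complete_or_empty:
  assumes "2 \<le> m" "m \<le> card V"
  shows "iso_complete V E \<or> iso_empty V E"
proof -
  have "m = card V"
  proof (rule ccontr)
    assume "m \<noteq> card V"
    have "m - 2 \<le> card V" using assms(2) by simp
    then obtain S where S: "S \<subseteq> V" "card S = m - 2" by (rule obtain_subset_with_card_n)
    then have "card (V - S) \<le> 2" using card_complement_le_two assms(1) by simp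
    moreover have "card (V - S) = card V - (m - 2)"
      using S finite_subset[OF S(1) finite_V] by (simp add: card_Diff_subset)
    ultimately show False using assms \<open>m \<noteq> card V\<close> by linarith
  qed
  then show ?thesis using twins_complete_or_empty[OF graph] all_pairs_twins by blast
qed

end

lemma automorphism_if_complete_or_empty:
  assumes graph: "simple_graph V E" and "iso_complete V E \<or> iso_empty V E" and bij: "bij_betw \<sigma> V V"
  shows "automorphism V E \<sigma>"
proof -
  have "E (\<sigma> u) (\<sigma> v) = E u v" if "u \<in> V" "v \<in> V" for u v
  proof (cases "u = v")
    case True
    have "\<sigma> u \<in> V" using bij_betwE[OF bij] that by auto
    then show ?thesis using graph True that unfolding simple_graph_def by blast
  next
    case False
    then have "\<sigma> u \<noteq> \<sigma> v" using bij that by (auto simp: bij_betw_def dest: inj_onD)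
    moreover have "\<sigma> u \<in> V" "\<sigma> v \<in> V" using bij_betwE[OF bij] that by auto
    ultimately show ?thesis
      using assms(2) False that by (auto simp: iso_complete_def iso_empty_def)
  qed
  then show ?thesis using bij by (simp add: automorphism_def)
qed

lemma distinguishing_iff_inj_on:
  assumes all: "\<And>\<sigma>. bij_betw \<sigma> V V \<Longrightarrow> automorphism V E \<sigma>"
  shows "distinguishing V E c \<longleftrightarrow> inj_on c V"
proof
  assume dist: "distinguishing V E c"
  show "inj_on c V"
  proof (rule inj_onI, rule ccontr)
    fix a b assume ab: "a \<in> V" "b \<in> V" "c a = c b" "a \<noteq> b"
    define \<tau> where "\<tau> = id(a := b, b := a)"
    have "bij_betw \<tau> V V"
      by (rule bij_betw_byWitness[where f' = \<tau>]) (use ab in \<open>auto simp: \<tau>_def\<close>)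
    then have "automorphism V E \<tau>" by (rule all)
    moreover have "\<forall>v\<in>V. c (\<tau> v) = c v" using ab by (simp add: \<tau>_def)
    ultimately have "\<forall>v\<in>V. \<tau> v = v" using dist unfolding distinguishing_def by blast
    then show False using ab by (auto simp: \<tau>_def)
  qed
qed (rule distinguishing_if_inj_on)

lemma threshold_number_if_full_symmetry:
  assumes "finite V" "V \<noteq> {}" and all: "\<And>\<sigma>. bij_betw \<sigma> V V \<Longrightarrow> automorphism V E \<sigma>"
  shows "distinguishing_threshold V E = card V" "distinguishing_number V E = card V"
proof -
  note threshold = distinguishing_threshold_spec[OF assms(1,2), where E = E]
  obtain c :: "'a \<Rightarrow> nat" where c: "card (c ` V) = distinguishing_threshold V E"
    using ex_colouring_card_image[OF assms(1) threshold(1,2)] .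
  then have "inj_on c V" using threshold(3) distinguishing_iff_inj_on[OF all] by blast
  then show "distinguishing_threshold V E = card V" using c card_image by metis
  obtain d where d: "d ` V \<subseteq> {0..<distinguishing_number V E}" "distinguishing V E d"
    using distinguishing_number_spec(2)[OF assms(1)] by blast
  then have "card V = card (d ` V)" using distinguishing_iff_inj_on[OF all] card_image by metis
  also have "\<dots> \<le> distinguishing_number V E" using card_mono[OF _ d(1)] by simp
  finally show "distinguishing_number V E = card V"
    using distinguishing_number_spec(1)[OF assms(1), of E] by simp
qed

lemma threshold_number_if_asymmetric:
  assumes "V \<noteq> {}" "asymmetric V E"
  shows "distinguishing_threshold V E = 1" "distinguishing_number V E = 1"
proof -
  show "distinguishing_threshold V E = 1"
    unfolding distinguishing_threshold_def
    by (rule Least_equality) (simp_all add: distinguishing_if_asymmetric[OF assms(2)])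
  show "distinguishing_number V E = 1"
    unfolding distinguishing_number_def
  proof (rule Least_equality)
    show "\<exists>c. c ` V \<subseteq> {0..<1} \<and> distinguishing V E c"
      using distinguishing_if_asymmetric[OF assms(2)] by (intro exI[of _ "\<lambda>_. 0"]) auto
    show "1 \<le> k" if "\<exists>c. c ` V \<subseteq> {0..<k} \<and> distinguishing V E c" for k
      using that assms(1) by (cases k) auto
  qed
qed

lemma asymmetric_or_complete_or_empty_if_threshold_eq_number:
  assumes graph: "simple_graph V E" and "V \<noteq> {}"
    and eq: "distinguishing_threshold V E = distinguishing_number V E"
  shows "asymmetric V E \<or> iso_complete V E \<or> iso_empty V E"
proof -
  have finite: "finite V" using graph by (simp add: simple_graph_def)
  note threshold = distinguishing_threshold_spec[OF finite assms(2), where E = E]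
  show ?thesis
  proof (cases "distinguishing_threshold V E \<le> 1")
    case True
    obtain c where "c ` V \<subseteq> {0..<distinguishing_number V E}" "distinguishing V E c"
      using distinguishing_number_spec(2)[OF finite] by blast
    then have "asymmetric V E"
      using True eq by (intro asymmetric_if_constant_distinguishing[of c V 0]) auto
    then show ?thesis ..
  next
    case False
    interpret sharp_threshold V E "distinguishing_threshold V E"
      using graph threshold(3) not_distinguishing_if_card_less_number[OF finite] eq
      by unfold_locales auto
    show ?thesis using complete_or_empty False threshold(2) by simp
  qed
qed

theorem mainTheorem7:
  fixes V :: "'a set" and E :: "'a \<Rightarrow> 'a \<Rightarrow> bool"
  assumes "simple_graph V E" and "V \<noteq> {}"
  shows "distinguishing_threshold V E = distinguishing_number V E \<longleftrightarrow>
           asymmetric V E \<or> iso_complete V E \<or> iso_empty V E"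
proof
  assume "distinguishing_threshold V E = distinguishing_number V E"
  then show "asymmetric V E \<or> iso_complete V E \<or> iso_empty V E"
    by (rule asymmetric_or_complete_or_empty_if_threshold_eq_number[OF assms])
next
  have finite: "finite V" using assms(1) by (simp add: simple_graph_def)
  assume "asymmetric V E \<or> iso_complete V E \<or> iso_empty V E"
  then consider "asymmetric V E" | "iso_complete V E \<or> iso_empty V E" by blast
  then show "distinguishing_threshold V E = distinguishing_number V E"
  proof cases
    case 1
    then show ?thesis using threshold_number_if_asymmetric[OF assms(2)] by simp
  next
    case 2
    then have "\<And>\<sigma>. bij_betw \<sigma> V V \<Longrightarrow> automorphism V E \<sigma>"
      using automorphism_if_complete_or_empty[OF assms(1)] by blast
    then show ?thesis using threshold_number_if_full_symmetry[OF finite assms(2)] by simp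
  qed
qed

end
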